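(* Let $\mathscr H$ be a real Hilbert space, $\mathscr A\subseteq\mathscr H$ a closed linear subspace, $\mathsf Z$ a countable index set, $(h_k)_{k\in\mathsf Z}$ an orthogonal family of nonzero vectors with $P_{\mathscr A}h_k\neq 0$ for all $k$, and $\mathbf s=(\mathrm s_k)$ a real sequence with $(\mathrm s_k/\|h_k\|)_k\in\ell^2(\mathsf Z)$. For $k\in\mathsf Z$ let $P_k$ be the orthogonal projection onto $\mathscr S_k:=\{v\in\mathscr A:\langle v,h_k\rangle=\mathrm s_k\}$, and set $\mu_k:=\|P_{\mathscr A}h_k\|^2/\|h_k\|^2$. Then $\mu_k\in(0,1]$ for every $k$, and for every $u\in\mathscr A$, $$P_{\mathscr A}P_{\mathscr C_{\mathbf s}}u=u+\sum_{k\in\mathsf Z}\mu_k\,(P_k u-u),$$ where $\mathscr C_{\mathbf s}:=\{v\in\mathscr H:\langle v,h_k\rangle=\mathrm s_k\ \forall k\in\mathsf Z\}$.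
   Context: $P_{\mathscr V}$ denotes orthogonal projection (nearest-point map) onto a nonempty closed affine subspace $\mathscr V$ of $\mathscr H$. *)

theory Defs
  imports "HOL-Analysis.Analysis"
begin

text \<open>The library's closest_point requires
  heine_borel, which excludes infinite-dimensional Hilbert spaces, so we use the same
  definition for arbitrary real inner product spaces.\<close>
definition proj :: "'a::real_inner set \<Rightarrow> 'a \<Rightarrow> 'a" where
  "proj S a = (SOME x. x \<in> S \<and> (\<forall>y\<in>S. dist a x \<le> dist a y))"

end

theory Submission
  imports Defs
begin

text \<open>Fix u in A and let w be the sum of the orthogonal series of the terms
  ((s k - <u, h k>) / |h k|^2) h k. It converges because its coefficients are square summable
  (by the hypothesis on s and Bessel's inequality for u), u + w satisfies all constraints, and
  w is orthogonal to every difference of points of C; so P_C u = u + w. The projection P_A is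
  bounded linear and may be applied termwise. Within A the hyperplane S k has normal
  P_A (h k), since <v, P_A (h k)> = <v, h k> for v in A; hence
  P_k u - u = ((s k - <u, h k>) / |P_A (h k)|^2) P_A (h k), and the k-th term of P_A w is
  exactly mu k (P_k u - u).\<close>

lemma parallelogram_law:
  fixes x y :: "'a::real_inner"
  shows "(norm (x - y))\<^sup>2 + (norm (x + y))\<^sup>2 = 2 * (norm x)\<^sup>2 + 2 * (norm y)\<^sup>2"
  by (simp add: power2_norm_eq_inner inner_diff_left inner_diff_right inner_add_left
      inner_add_right inner_commute)

lemma minimizing_sequence_Cauchy:
  fixes S :: "'a::real_inner set"
  assumes "convex S" and yS: "\<And>n. y n \<in> S"
    and lim: "(\<lambda>n. dist a (y n)) \<longlonglongrightarrow> infdist a S"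
  shows "Cauchy y"
proof (rule metric_CauchyI)
  define d where "d = infdist a S"
  define f where "f = (\<lambda>n. (dist a (y n))\<^sup>2 - d\<^sup>2)"
  have gap: "(dist (y m) (y n))\<^sup>2 \<le> 2 * f m + 2 * f n" for m n
  proof -
    have "midpoint (y m) (y n) \<in> S"
      using convexD[OF \<open>convex S\<close> yS yS, of "1/2" "1/2"]
      by (simp add: midpoint_def scaleR_add_right)
    then have "d \<le> dist a (midpoint (y m) (y n))"
      unfolding d_def by (rule infdist_le)
    then have "d\<^sup>2 \<le> (dist a (midpoint (y m) (y n)))\<^sup>2"
      using infdist_nonneg[of a S] by (simp add: d_def power_mono)
    moreover have "(a - y m) + (a - y n) = 2 *\<^sub>R (a - midpoint (y m) (y n))"
      by (simp add: midpoint_def algebra_simps scaleR_2)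
    ultimately have "4 * d\<^sup>2 \<le> (norm ((a - y m) + (a - y n)))\<^sup>2"
      by (simp add: dist_norm power_mult_distrib)
    moreover have "(a - y m) - (a - y n) = y n - y m" by simp
    ultimately show ?thesis
      using parallelogram_law[of "a - y m" "a - y n"]
      by (simp add: f_def dist_norm norm_minus_commute)
  qed
  have "f \<longlonglongrightarrow> 0"
    using tendsto_diff[OF tendsto_power[OF lim, of 2] tendsto_const[of "d\<^sup>2"]]
    by (simp add: f_def d_def)
  fix e :: real assume "e > 0"
  then have "eventually (\<lambda>n. f n < e\<^sup>2 / 4) sequentially"
    by (intro order_tendstoD(2)[OF \<open>f \<longlonglongrightarrow> 0\<close>]) simp
  then obtain N where N: "\<And>n. n \<ge> N \<Longrightarrow> f n < e\<^sup>2 / 4"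
    by (auto simp: eventually_sequentially)
  show "\<exists>N. \<forall>m\<ge>N. \<forall>n\<ge>N. dist (y m) (y n) < e"
  proof (intro exI allI impI)
    fix m n assume "N \<le> m" "N \<le> n"
    then have "(dist (y m) (y n))\<^sup>2 < e\<^sup>2"
      using gap[of m n] N[of m] N[of n] by linarith
    then show "dist (y m) (y n) < e"
      using \<open>e > 0\<close> by (simp add: power_less_imp_less_base)
  qed
qed

lemma nearest_point_exists:
  fixes S :: "'a::{real_inner,complete_space} set"
  assumes "convex S" "closed S" "S \<noteq> {}"
  shows "\<exists>x\<in>S. \<forall>y\<in>S. dist a x \<le> dist a y"
proof -
  have "\<exists>y\<in>S. dist a y < infdist a S + inverse (real (Suc n))" for n
    using cInf_lessD[of "dist a ` S"] \<open>S \<noteq> {}\<close> by (simp add: infdist_notempty)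
  then obtain y where yS: "\<And>n. y n \<in> S"
    and y_close: "\<And>n. dist a (y n) < infdist a S + inverse (real (Suc n))"
    by metis
  have lim: "(\<lambda>n. dist a (y n)) \<longlonglongrightarrow> infdist a S"
  proof (rule tendsto_sandwich)
    show "\<forall>\<^sub>F n in sequentially. infdist a S \<le> dist a (y n)"
      using yS by (simp add: infdist_le)
    show "\<forall>\<^sub>F n in sequentially. dist a (y n) \<le> infdist a S + inverse (real (Suc n))"
      using y_close by (simp add: less_imp_le)
    show "(\<lambda>n. infdist a S + inverse (real (Suc n))) \<longlonglongrightarrow> infdist a S"
      using tendsto_add[OF tendsto_const LIMSEQ_inverse_real_of_nat] by simp
  qed simp
  obtain x where "y \<longlonglongrightarrow> x"
    using minimizing_sequence_Cauchy[OF \<open>convex S\<close> yS lim] convergent_eq_Cauchy by blast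
  then have "x \<in> S" and "(\<lambda>n. dist a (y n)) \<longlonglongrightarrow> dist a x"
    using closed_sequentially[OF \<open>closed S\<close>] yS by (auto intro: tendsto_dist)
  with lim have "dist a x = infdist a S"
    using LIMSEQ_unique by blast
  with \<open>x \<in> S\<close> show ?thesis
    by (auto intro!: bexI[of _ x] infdist_le)
qed

lemma proj_nearest:
  fixes S :: "'a::{real_inner,complete_space} set"
  assumes "convex S" "closed S" "S \<noteq> {}"
  shows "proj S a \<in> S" and "\<And>y. y \<in> S \<Longrightarrow> dist a (proj S a) \<le> dist a y"
proof -
  have "\<exists>x. x \<in> S \<and> (\<forall>y\<in>S. dist a x \<le> dist a y)"
    using nearest_point_exists[OF assms] by blast
  then have "proj S a \<in> S \<and> (\<forall>y\<in>S. dist a (proj S a) \<le> dist a y)"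
    unfolding proj_def by (rule someI_ex)
  then show "proj S a \<in> S" "\<And>y. y \<in> S \<Longrightarrow> dist a (proj S a) \<le> dist a y"
    by blast+
qed

lemma proj_eqI:
  fixes S :: "'a::real_inner set"
  assumes "x \<in> S" and orth: "\<And>y. y \<in> S \<Longrightarrow> (a - x) \<bullet> (y - x) = 0"
  shows "proj S a = x"
proof -
  have pyth: "(dist a y)\<^sup>2 = (dist a x)\<^sup>2 + (dist x y)\<^sup>2" if "y \<in> S" for y
  proof -
    have "orthogonal (a - x) (x - y)"
      using orth[OF that] by (simp add: orthogonal_def inner_diff_right)
    then show ?thesis
      using norm_add_Pythagorean[of "a - x" "x - y"] by (simp add: dist_norm)
  qed
  show ?thesis
    unfolding proj_def
  proof (rule some_equality)
    have "dist a x \<le> dist a y" if "y \<in> S" for y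
      by (rule power2_le_imp_le) (use pyth[OF that] in simp_all)
    with \<open>x \<in> S\<close> show "x \<in> S \<and> (\<forall>y\<in>S. dist a x \<le> dist a y)"
      by blast
  next
    fix x' assume x': "x' \<in> S \<and> (\<forall>y\<in>S. dist a x' \<le> dist a y)"
    then have "(dist a x')\<^sup>2 \<le> (dist a x)\<^sup>2"
      using \<open>x \<in> S\<close> by (intro power_mono) auto
    then show "x' = x"
      using pyth[of x'] x' by simp
  qed
qed

lemma nearest_point_subspace_orthogonal:
  fixes A :: "'a::real_inner set"
  assumes "subspace A" "x \<in> A" and nearest: "\<And>y. y \<in> A \<Longrightarrow> dist a x \<le> dist a y"
    and "z \<in> A"
  shows "(a - x) \<bullet> z = 0"
proof (cases "z = 0")
  case False
  define p where "p = (a - x) \<bullet> z"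
  define t where "t = p / (norm z)\<^sup>2"
  have "x + t *\<^sub>R z \<in> A"
    using assms by (simp add: subspace_add subspace_mul)
  then have "dist a x \<le> norm ((a - x) - t *\<^sub>R z)"
    using nearest by (simp add: dist_norm diff_diff_eq)
  then have "(norm (a - x))\<^sup>2 \<le> (norm ((a - x) - t *\<^sub>R z))\<^sup>2"
    by (simp add: dist_norm power_mono)
  also have "\<dots> = (norm (a - x))\<^sup>2 - 2 * t * p + t\<^sup>2 * (norm z)\<^sup>2"
    unfolding power2_norm_eq_inner
    by (simp add: p_def inner_diff_left inner_diff_right inner_commute power2_eq_square
        algebra_simps)
  also have "\<dots> = (norm (a - x))\<^sup>2 - p\<^sup>2 / (norm z)\<^sup>2"
    using False by (simp add: t_def power2_eq_square field_simps)
  finally have "p\<^sup>2 / (norm z)\<^sup>2 \<le> 0"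
    by simp
  then show ?thesis
    using False by (simp add: p_def divide_le_0_iff)
qed simp

lemma proj_subspace:
  fixes A :: "'a::{real_inner,complete_space} set"
  assumes "subspace A" "closed A"
  shows "proj A a \<in> A" and "\<And>y. y \<in> A \<Longrightarrow> (a - proj A a) \<bullet> y = 0"
proof -
  have "convex A" "A \<noteq> {}"
    using assms subspace_imp_convex subspace_0 by blast+
  note nearest = proj_nearest[OF this(1) \<open>closed A\<close> this(2)]
  show "proj A a \<in> A"
    by (rule nearest(1))
  show "(a - proj A a) \<bullet> y = 0" if "y \<in> A" for y
    using nearest_point_subspace_orthogonal[OF \<open>subspace A\<close> nearest(1) nearest(2) that] .
qed

lemma norm_proj_subspace_le:
  fixes A :: "'a::{real_inner,complete_space} set"
  assumes "subspace A" "closed A"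
  shows "norm (proj A a) \<le> norm a"
proof -
  have "orthogonal (proj A a) (a - proj A a)"
    using proj_subspace[OF assms] by (simp add: orthogonal_def inner_commute)
  then have "(norm a)\<^sup>2 = (norm (proj A a))\<^sup>2 + (norm (a - proj A a))\<^sup>2"
    using norm_add_Pythagorean[of "proj A a" "a - proj A a"] by simp
  then have "(norm (proj A a))\<^sup>2 \<le> (norm a)\<^sup>2"
    using zero_le_power2[of "norm (a - proj A a)"] by linarith
  then show ?thesis
    by (rule power2_le_imp_le) simp
qed

lemma bounded_linear_proj_subspace:
  fixes A :: "'a::{real_inner,complete_space} set"
  assumes "subspace A" "closed A"
  shows "bounded_linear (proj A)"
proof (rule bounded_linear_intro)
  note PA = proj_subspace(1)[OF assms] and P_orth = proj_subspace(2)[OF assms]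
  show "proj A (a + b) = proj A a + proj A b" for a b
  proof (rule proj_eqI)
    show "proj A a + proj A b \<in> A"
      using PA \<open>subspace A\<close> by (simp add: subspace_add)
    fix y assume "y \<in> A"
    then have w: "y - (proj A a + proj A b) \<in> A"
      using PA \<open>subspace A\<close> by (simp add: subspace_add subspace_diff)
    have "a + b - (proj A a + proj A b) = (a - proj A a) + (b - proj A b)"
      by simp
    then show "(a + b - (proj A a + proj A b)) \<bullet> (y - (proj A a + proj A b)) = 0"
      using P_orth[OF w, of a] P_orth[OF w, of b] by (simp only: inner_add_left)
  qed
  show "proj A (r *\<^sub>R a) = r *\<^sub>R proj A a" for r a
  proof (rule proj_eqI)
    show "r *\<^sub>R proj A a \<in> A"
      using PA \<open>subspace A\<close> by (simp add: subspace_mul)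
    fix y assume "y \<in> A"
    then have "y - r *\<^sub>R proj A a \<in> A"
      using PA \<open>subspace A\<close> by (simp add: subspace_mul subspace_diff)
    then show "(r *\<^sub>R a - r *\<^sub>R proj A a) \<bullet> (y - r *\<^sub>R proj A a) = 0"
      using P_orth[of _ a] by (simp flip: scaleR_diff_right)
  qed
  show "norm (proj A a) \<le> norm a * 1" for a
    using norm_proj_subspace_le[OF assms] by simp
qed

lemma proj_subspace_hyperplane:
  fixes A :: "'a::{real_inner,complete_space} set"
  assumes "subspace A" "closed A" "u \<in> A" and "proj A h \<noteq> 0"
  shows "proj {v\<in>A. v \<bullet> h = c} u = u + ((c - u \<bullet> h) / (norm (proj A h))\<^sup>2) *\<^sub>R proj A h"
    (is "_ = u + ?t *\<^sub>R ?p")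
proof (rule proj_eqI)
  note P_orth = proj_subspace(2)[OF assms(1,2)]
  have "?p \<in> A"
    using proj_subspace(1)[OF assms(1,2)] .
  have hp: "h \<bullet> ?p = (norm ?p)\<^sup>2"
    using P_orth[OF \<open>?p \<in> A\<close>, of h] by (simp add: inner_diff_left power2_norm_eq_inner)
  show x_in: "u + ?t *\<^sub>R ?p \<in> {v\<in>A. v \<bullet> h = c}"
    using assms \<open>?p \<in> A\<close> hp
    by (simp add: subspace_add subspace_mul inner_add_left inner_commute[of ?p])
  fix y assume y: "y \<in> {v\<in>A. v \<bullet> h = c}"
  then have "y - (u + ?t *\<^sub>R ?p) \<in> A"
    using x_in \<open>subspace A\<close> by (simp add: subspace_diff)
  moreover have "h \<bullet> (y - (u + ?t *\<^sub>R ?p)) = 0"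
    using y x_in by (simp add: inner_diff_right inner_commute[of h])
  ultimately have "?p \<bullet> (y - (u + ?t *\<^sub>R ?p)) = 0"
    using P_orth[of _ h] by (simp add: inner_diff_left)
  then show "(u - (u + ?t *\<^sub>R ?p)) \<bullet> (y - (u + ?t *\<^sub>R ?p)) = 0"
    by simp
qed

lemma proj_subspace_hyperplane_step:
  fixes A :: "'a::{real_inner,complete_space} set"
  assumes "subspace A" "closed A" "u \<in> A" and "proj A h \<noteq> 0"
  shows "proj A (((c - u \<bullet> h) / (norm h)\<^sup>2) *\<^sub>R h)
    = ((norm (proj A h))\<^sup>2 / (norm h)\<^sup>2) *\<^sub>R (proj {v\<in>A. v \<bullet> h = c} u - u)"
proof -
  interpret P: bounded_linear "proj A"
    using bounded_linear_proj_subspace[OF assms(1,2)] .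
  have "((c - u \<bullet> h) / (norm h)\<^sup>2) *\<^sub>R proj A h = ((norm (proj A h))\<^sup>2 / (norm h)\<^sup>2)
      *\<^sub>R ((c - u \<bullet> h) / (norm (proj A h))\<^sup>2) *\<^sub>R proj A h"
    using \<open>proj A h \<noteq> 0\<close> by simp
  then show ?thesis
    using proj_subspace_hyperplane[OF assms] by (simp add: P.scale)
qed

lemma bessel_inequality_finite:
  fixes h :: "'i \<Rightarrow> 'a::real_inner"
  assumes "finite F"
    and orth: "\<And>j k. j \<in> F \<Longrightarrow> k \<in> F \<Longrightarrow> j \<noteq> k \<Longrightarrow> h j \<bullet> h k = 0"
    and nz: "\<And>k. k \<in> F \<Longrightarrow> h k \<noteq> 0"
  shows "(\<Sum>k\<in>F. (u \<bullet> h k / norm (h k))\<^sup>2) \<le> (norm u)\<^sup>2"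
proof -
  define c where "c k = u \<bullet> h k / (norm (h k))\<^sup>2" for k
  define q where "q = (\<Sum>k\<in>F. c k *\<^sub>R h k)"
  define S where "S = (\<Sum>k\<in>F. (u \<bullet> h k / norm (h k))\<^sup>2)"
  have coeff: "c k * (u \<bullet> h k) = (u \<bullet> h k / norm (h k))\<^sup>2"
    "(norm (c k *\<^sub>R h k))\<^sup>2 = (u \<bullet> h k / norm (h k))\<^sup>2" if "k \<in> F" for k
    using nz[OF that] by (auto simp: c_def power2_eq_square field_simps)
  have "u \<bullet> q = S"
    unfolding q_def S_def by (simp add: inner_sum_right coeff)
  moreover have "(norm q)\<^sup>2 = S"
  proof -
    have "pairwise (\<lambda>i j. orthogonal (c i *\<^sub>R h i) (c j *\<^sub>R h j)) F"
      using orth by (auto simp: pairwise_def orthogonal_def)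
    then have "(norm q)\<^sup>2 = (\<Sum>k\<in>F. (norm (c k *\<^sub>R h k))\<^sup>2)"
      unfolding q_def by (rule norm_sum_Pythagorean[OF \<open>finite F\<close>])
    then show ?thesis
      unfolding S_def using coeff(2) by simp
  qed
  moreover have "(norm (u - q))\<^sup>2 = (norm u)\<^sup>2 - 2 * (u \<bullet> q) + (norm q)\<^sup>2"
    by (simp add: power2_norm_eq_inner inner_diff_left inner_diff_right inner_commute)
  ultimately show ?thesis
    using zero_le_power2[of "norm (u - q)"] by (simp add: S_def)
qed

lemma bessel_summable:
  fixes h :: "'i \<Rightarrow> 'a::real_inner"
  assumes orth: "\<And>j k. j \<in> Z \<Longrightarrow> k \<in> Z \<Longrightarrow> j \<noteq> k \<Longrightarrow> h j \<bullet> h k = 0"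
    and nz: "\<And>k. k \<in> Z \<Longrightarrow> h k \<noteq> 0"
  shows "(\<lambda>k. (u \<bullet> h k / norm (h k))\<^sup>2) summable_on Z"
proof (rule nonneg_bdd_above_summable_on)
  show "bdd_above (sum (\<lambda>k. (u \<bullet> h k / norm (h k))\<^sup>2) ` {F. F \<subseteq> Z \<and> finite F})"
  proof (rule bdd_aboveI, clarify)
    fix F assume "F \<subseteq> Z" "finite F"
    then show "(\<Sum>k\<in>F. (u \<bullet> h k / norm (h k))\<^sup>2) \<le> (norm u)\<^sup>2"
      using orth nz by (intro bessel_inequality_finite) (auto simp: subset_iff)
  qed
qed simp

lemma orthogonal_family_summable:
  fixes g :: "'i \<Rightarrow> 'a::{real_inner,complete_space}"
  assumes orth: "\<And>j k. j \<in> Z \<Longrightarrow> k \<in> Z \<Longrightarrow> j \<noteq> k \<Longrightarrow> g j \<bullet> g k = 0"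
    and "(\<lambda>k. (norm (g k))\<^sup>2) summable_on Z"
  shows "g summable_on Z"
proof -
  define n where "n = (\<lambda>k. (norm (g k))\<^sup>2)"
  obtain L where lim: "(sum n \<longlongrightarrow> L) (finite_subsets_at_top Z)"
    using assms(2) unfolding summable_on_def has_sum_def n_def by blast
  have small_tail: "\<exists>F0. finite F0 \<and> F0 \<subseteq> Z \<and>
      (\<forall>F. finite F \<and> F0 \<subseteq> F \<and> F \<subseteq> Z \<longrightarrow> norm (sum g F - sum g F0) < e)" if "e > 0" for e
  proof -
    have "eventually (\<lambda>F. dist (sum n F) L < e\<^sup>2 / 2) (finite_subsets_at_top Z)"
      using lim \<open>e > 0\<close> unfolding tendsto_iff by (meson half_gt_zero zero_less_power)
    then obtain F0 where F0: "finite F0" "F0 \<subseteq> Z"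
      and close: "\<And>F. finite F \<and> F0 \<subseteq> F \<and> F \<subseteq> Z \<Longrightarrow> dist (sum n F) L < e\<^sup>2 / 2"
      unfolding eventually_finite_subsets_at_top by blast
    have "norm (sum g F - sum g F0) < e" if F: "finite F" "F0 \<subseteq> F" "F \<subseteq> Z" for F
    proof -
      have "pairwise (\<lambda>i j. orthogonal (g i) (g j)) (F - F0)"
        using orth F by (auto simp: pairwise_def orthogonal_def)
      then have "(norm (sum g (F - F0)))\<^sup>2 = sum n (F - F0)"
        unfolding n_def using F by (intro norm_sum_Pythagorean) auto
      then have "(norm (sum g F - sum g F0))\<^sup>2 = sum n (F - F0)"
        using F by (simp add: sum_diff)
      also have "\<dots> = sum n F - sum n F0"
        using F by (simp add: sum_diff)
      also have "\<dots> \<le> dist (sum n F) (sum n F0)"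
        by (simp add: dist_real_def)
      also have "\<dots> \<le> dist (sum n F) L + dist (sum n F0) L"
        by (rule dist_triangle2)
      also have "\<dots> < e\<^sup>2"
        using close[of F] close[of F0] F F0 by simp
      finally show ?thesis
        using \<open>e > 0\<close> by (simp add: power_less_imp_less_base)
    qed
    with F0 show ?thesis by blast
  qed
  have "cauchy_filter (filtermap (sum g) (finite_subsets_at_top Z))"
    unfolding cauchy_filter_metric_filtermap
  proof (intro allI impI)
    fix e :: real assume "e > 0"
    then obtain F0 where F0: "finite F0" "F0 \<subseteq> Z"
      and tail: "\<And>F. finite F \<and> F0 \<subseteq> F \<and> F \<subseteq> Z \<Longrightarrow> norm (sum g F - sum g F0) < e / 2"
      using small_tail[of "e / 2"] by auto
    define P where "P F \<longleftrightarrow> finite F \<and> F0 \<subseteq> F \<and> F \<subseteq> Z" for F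
    have "eventually P (finite_subsets_at_top Z)"
      unfolding eventually_finite_subsets_at_top P_def using F0 by blast
    moreover have "dist (sum g F1) (sum g F2) < e" if "P F1" "P F2" for F1 F2
      using tail[of F1] tail[of F2] that norm_triangle_ineq4[of "sum g F1 - sum g F0" "sum g F2 - sum g F0"]
      by (simp add: P_def dist_norm)
    ultimately show "\<exists>P. eventually P (finite_subsets_at_top Z) \<and>
        (\<forall>F1 F2. P F1 \<and> P F2 \<longrightarrow> dist (sum g F1) (sum g F2) < e)"
      by blast
  qed
  moreover have "complete (UNIV :: 'a set)"
    using complete_UNIV .
  ultimately obtain L' where "(sum g \<longlongrightarrow> L') (finite_subsets_at_top Z)"
    using complete_uniform[where S = UNIV] by (force simp: filterlim_def)
  then show ?thesis
    unfolding summable_on_def has_sum_def by blast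
qed

lemma diff_square_le:
  fixes a b :: real
  shows "(a - b)\<^sup>2 \<le> 2 * a\<^sup>2 + 2 * b\<^sup>2"
  using zero_le_power2[of "a + b"] by (simp add: power2_eq_square algebra_simps)

lemma proj_orthogonal_constraints:
  fixes h :: "'i \<Rightarrow> 'a::{real_inner,complete_space}"
  assumes orth: "\<And>j k. j \<in> Z \<Longrightarrow> k \<in> Z \<Longrightarrow> j \<noteq> k \<Longrightarrow> h j \<bullet> h k = 0"
    and nz: "\<And>k. k \<in> Z \<Longrightarrow> h k \<noteq> 0"
    and "(\<lambda>k. (s k / norm (h k))\<^sup>2) summable_on Z"
  shows "((\<lambda>k. ((s k - u \<bullet> h k) / (norm (h k))\<^sup>2) *\<^sub>R h k)
           has_sum (proj {v. \<forall>k\<in>Z. v \<bullet> h k = s k} u - u)) Z"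
proof -
  define g where "g = (\<lambda>k. ((s k - u \<bullet> h k) / (norm (h k))\<^sup>2) *\<^sub>R h k)"
  define C where "C = {v. \<forall>k\<in>Z. v \<bullet> h k = s k}"
  have g_orth: "g j \<bullet> g k = 0" if "j \<in> Z" "k \<in> Z" "j \<noteq> k" for j k
    using orth[OF that] by (simp add: g_def)
  have "(\<lambda>k. (norm (g k))\<^sup>2) summable_on Z"
  proof (rule summable_on_comparison_test)
    show "(\<lambda>k. 2 * (s k / norm (h k))\<^sup>2 + 2 * (u \<bullet> h k / norm (h k))\<^sup>2) summable_on Z"
      using assms(3) bessel_summable[OF orth nz]
      by (intro summable_on_add summable_on_cmult_right) auto
    fix k assume "k \<in> Z"
    have "(norm (g k))\<^sup>2 = (s k / norm (h k) - u \<bullet> h k / norm (h k))\<^sup>2"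
      using nz[OF \<open>k \<in> Z\<close>] by (simp add: g_def power2_eq_square field_simps)
    also have "\<dots> \<le> 2 * (s k / norm (h k))\<^sup>2 + 2 * (u \<bullet> h k / norm (h k))\<^sup>2"
      by (rule diff_square_le)
    finally show "(norm (g k))\<^sup>2 \<le> 2 * (s k / norm (h k))\<^sup>2 + 2 * (u \<bullet> h k / norm (h k))\<^sup>2" .
  qed simp
  then have "g summable_on Z"
    using orthogonal_family_summable[of Z g] g_orth by blast
  then obtain w where w: "(g has_sum w) Z"
    by (auto simp: summable_on_def)
  have w_inner: "w \<bullet> h j = s j - u \<bullet> h j" if "j \<in> Z" for j
  proof (rule has_sum_unique)
    show "((\<lambda>k. g k \<bullet> h j) has_sum w \<bullet> h j) Z"
      by (rule has_sum_bounded_linear[OF bounded_linear_inner_left w])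
    show "((\<lambda>k. g k \<bullet> h j) has_sum (s j - u \<bullet> h j)) Z"
    proof (rule has_sum_finite_neutralI[of "{j}"])
      show "g k \<bullet> h j = 0" if "k \<in> Z - {j}" for k
        using orth[of k j] that \<open>j \<in> Z\<close> by (simp add: g_def)
      show "s j - u \<bullet> h j = (\<Sum>k\<in>{j}. g k \<bullet> h j)"
        using nz[OF \<open>j \<in> Z\<close>] by (simp add: g_def power2_norm_eq_inner)
    qed (use \<open>j \<in> Z\<close> in auto)
  qed
  have "proj C u = u + w"
  proof (rule proj_eqI)
    show uw: "u + w \<in> C"
      using w_inner by (simp add: C_def inner_add_left)
    fix y assume "y \<in> C"
    have "g k \<bullet> (y - (u + w)) = 0" if "k \<in> Z" for k
      using \<open>y \<in> C\<close> uw that by (simp add: C_def g_def inner_diff_right inner_commute[of "h k"])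
    then have "((\<lambda>k. g k \<bullet> (y - (u + w))) has_sum 0) Z"
      by (simp add: has_sum_0)
    moreover have "((\<lambda>k. g k \<bullet> (y - (u + w))) has_sum w \<bullet> (y - (u + w))) Z"
      by (rule has_sum_bounded_linear[OF bounded_linear_inner_left w])
    ultimately show "(u - (u + w)) \<bullet> (y - (u + w)) = 0"
      using has_sum_unique by fastforce
  qed
  with w show ?thesis
    by (simp add: g_def C_def)
qed

theorem mainTheorem4:
  fixes A :: "'a::{real_inner,complete_space} set"
    and Z :: "'i set"
    and h :: "'i \<Rightarrow> 'a"
    and s :: "'i \<Rightarrow> real"
  assumes "subspace A" and "closed A"
    and "countable Z"
    and "\<forall>j\<in>Z. \<forall>k\<in>Z. j \<noteq> k \<longrightarrow> h j \<bullet> h k = 0"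
    and "\<forall>k\<in>Z. h k \<noteq> 0"
    and "\<forall>k\<in>Z. proj A (h k) \<noteq> 0"
    and "(\<lambda>k. (s k / norm (h k))\<^sup>2) summable_on Z"
  shows "(\<forall>k\<in>Z. 0 < (norm (proj A (h k)))\<^sup>2 / (norm (h k))\<^sup>2
                 \<and> (norm (proj A (h k)))\<^sup>2 / (norm (h k))\<^sup>2 \<le> 1)
    \<and> (\<forall>u\<in>A.
           ((\<lambda>k. ((norm (proj A (h k)))\<^sup>2 / (norm (h k))\<^sup>2)
                   *\<^sub>R (proj {v\<in>A. v \<bullet> h k = s k} u - u))
            has_sum (proj A (proj {v. \<forall>k\<in>Z. v \<bullet> h k = s k} u) - u)) Z)"
proof (intro conjI ballI)
  fix k assume "k \<in> Z"
  then have "0 < (norm (proj A (h k)))\<^sup>2" "(norm (proj A (h k)))\<^sup>2 \<le> (norm (h k))\<^sup>2"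
    using assms(6) norm_proj_subspace_le[OF assms(1,2)] by (auto intro: power_mono)
  then show "0 < (norm (proj A (h k)))\<^sup>2 / (norm (h k))\<^sup>2"
    and "(norm (proj A (h k)))\<^sup>2 / (norm (h k))\<^sup>2 \<le> 1"
    by (auto simp: divide_le_eq_1 intro!: divide_pos_pos)
next
  fix u assume "u \<in> A"
  interpret P: bounded_linear "proj A"
    using bounded_linear_proj_subspace[OF assms(1,2)] .
  let ?C = "{v. \<forall>k\<in>Z. v \<bullet> h k = s k}"
  have "proj A u = u"
    using proj_eqI[OF \<open>u \<in> A\<close>, of u] by simp
  have "((\<lambda>k. ((s k - u \<bullet> h k) / (norm (h k))\<^sup>2) *\<^sub>R h k) has_sum (proj ?C u - u)) Z"
    using assms(4,5,7) by (intro proj_orthogonal_constraints) auto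
  from has_sum_bounded_linear[OF P.bounded_linear_axioms this]
  have "((\<lambda>k. proj A (((s k - u \<bullet> h k) / (norm (h k))\<^sup>2) *\<^sub>R h k))
      has_sum (proj A (proj ?C u) - u)) Z"
    by (simp add: P.diff \<open>proj A u = u\<close>)
  then show "((\<lambda>k. ((norm (proj A (h k)))\<^sup>2 / (norm (h k))\<^sup>2)
                   *\<^sub>R (proj {v\<in>A. v \<bullet> h k = s k} u - u))
            has_sum (proj A (proj ?C u) - u)) Z"
    using proj_subspace_hyperplane_step[OF assms(1,2) \<open>u \<in> A\<close>] assms(6)
    by (simp cong: has_sum_cong)
qed

end
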